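(* Let $X, Y \subseteq \omega$. There exists an embedding $\mathcal{K}^X_2 \hookrightarrow \mathcal{K}^Y_2$ if and only if $X \le_T Y$.
   Context: A pca is a set with a partial binary application operation containing distinct $\mathrm{s},\mathrm{k}$ with $\mathrm{k}ab\downarrow=a$, $\mathrm{s}ab\downarrow$, $\mathrm{s}abc\simeq(ac)(bc)$. An embedding of pcas is an injective map $f$ with: if $ab$ is defined then $f(a)f(b)$ is defined and equals $f(ab)$. $\mathcal{K}_2^Z$: elements are the total $Z$-computable functions $g:\omega\to\omega$, with $g\cdot h$ the function $n\mapsto\Phi^{g\oplus h}_{g(0)}(n)$ ($\Phi_e$ the $e$-th Turing functional, $(g\oplus h)(2n)=g(n)$, $(g\oplus h)(2n+1)=h(n)$), defined if and only if this function is total. *)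

theory Defs
  imports Main "HOL-Library.Nat_Bijection"
begin

text \<open>Index e is decoded by
  e mod 9 (constructor) and e div 9 (sub-indices, split by prod_decode
  for binary constructors).
  0: zero;  1: successor;  2: first projection;  3: second projection;
  4: oracle query;  5: composition (apply b, then a);
  6: pairing x -> <a x, b x>;  7: primitive recursion on <x,k>;
  8: unbounded search (mu operator) over <x,k>.
  phi_rel Or e x y  means  Phi_e^Or(x) converges with output y.\<close>

definition pfst :: "nat \<Rightarrow> nat" where "pfst x = fst (prod_decode x)"
definition psnd :: "nat \<Rightarrow> nat" where "psnd x = snd (prod_decode x)"

inductive phi_rel :: "(nat \<Rightarrow> nat) \<Rightarrow> nat \<Rightarrow> nat \<Rightarrow> nat \<Rightarrow> bool"
  for Or :: "nat \<Rightarrow> nat" where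
  zero: "e mod 9 = 0 \<Longrightarrow> phi_rel Or e x 0"
| succ: "e mod 9 = 1 \<Longrightarrow> phi_rel Or e x (Suc x)"
| proj1: "e mod 9 = 2 \<Longrightarrow> phi_rel Or e x (pfst x)"
| proj2: "e mod 9 = 3 \<Longrightarrow> phi_rel Or e x (psnd x)"
| orc: "e mod 9 = 4 \<Longrightarrow> phi_rel Or e x (Or x)"
| comp: "e mod 9 = 5 \<Longrightarrow> phi_rel Or (psnd (e div 9)) x z \<Longrightarrow>
         phi_rel Or (pfst (e div 9)) z y \<Longrightarrow> phi_rel Or e x y"
| pair: "e mod 9 = 6 \<Longrightarrow> phi_rel Or (pfst (e div 9)) x y1 \<Longrightarrow>
         phi_rel Or (psnd (e div 9)) x y2 \<Longrightarrow> phi_rel Or e x (prod_encode (y1, y2))"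
| prec0: "e mod 9 = 7 \<Longrightarrow> phi_rel Or (pfst (e div 9)) x y \<Longrightarrow>
         phi_rel Or e (prod_encode (x, 0)) y"
| precS: "e mod 9 = 7 \<Longrightarrow> phi_rel Or e (prod_encode (x, k)) z \<Longrightarrow>
         phi_rel Or (psnd (e div 9)) (prod_encode (x, prod_encode (k, z))) y \<Longrightarrow>
         phi_rel Or e (prod_encode (x, Suc k)) y"
| mu: "e mod 9 = 8 \<Longrightarrow> phi_rel Or (e div 9) (prod_encode (x, k)) 0 \<Longrightarrow>
         (\<forall>j<k. \<exists>v. 0 < v \<and> phi_rel Or (e div 9) (prod_encode (x, j)) v) \<Longrightarrow>
         phi_rel Or e x k"

definition Phi :: "nat \<Rightarrow> (nat \<Rightarrow> nat) \<Rightarrow> nat \<Rightarrow> nat option" where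
  "Phi e Or x = (if \<exists>y. phi_rel Or e x y then Some (THE y. phi_rel Or e x y) else None)"

definition chi :: "nat set \<Rightarrow> nat \<Rightarrow> nat" where
  "chi Z n = (if n \<in> Z then 1 else 0)"

definition computable_in :: "nat set \<Rightarrow> (nat \<Rightarrow> nat) \<Rightarrow> bool" where
  "computable_in Z g \<longleftrightarrow> (\<exists>e. \<forall>n. Phi e (chi Z) n = Some (g n))"

definition turing_le :: "nat set \<Rightarrow> nat set \<Rightarrow> bool" where
  "turing_le X Y \<longleftrightarrow> computable_in Y (chi X)"

definition join :: "(nat \<Rightarrow> nat) \<Rightarrow> (nat \<Rightarrow> nat) \<Rightarrow> nat \<Rightarrow> nat" where
  "join g h n = (if even n then g (n div 2) else h (n div 2))"

definition K2_carrier :: "nat set \<Rightarrow> (nat \<Rightarrow> nat) set" where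
  "K2_carrier Z = {g. computable_in Z g}"

definition K2_app :: "(nat \<Rightarrow> nat) \<Rightarrow> (nat \<Rightarrow> nat) \<Rightarrow> (nat \<Rightarrow> nat) option" where
  "K2_app g h = (if \<forall>n. Phi (g 0) (join g h) n \<noteq> None
                 then Some (\<lambda>n. the (Phi (g 0) (join g h) n)) else None)"

definition pca_embedding ::
  "'a set \<Rightarrow> ('a \<Rightarrow> 'a \<Rightarrow> 'a option) \<Rightarrow> 'b set \<Rightarrow> ('b \<Rightarrow> 'b \<Rightarrow> 'b option) \<Rightarrow> ('a \<Rightarrow> 'b) \<Rightarrow> bool"
where
  "pca_embedding A appA B appB f \<longleftrightarrow>
     f ` A \<subseteq> B \<and> inj_on f A \<and>
     (\<forall>a\<in>A. \<forall>b\<in>A. \<forall>c. appA a b = Some c \<longrightarrow> appB (f a) (f b) = Some (f c))"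

end

theory Submission
  imports Defs
begin

text \<open>
  If X is Turing reducible to Y, every X-computable function is Y-computable, so the identity
  is an embedding of K2 relative to X into K2 relative to Y. Conversely, let f be an embedding.
  For every X-computable g there is an X-computable s mapping the constant function with value
  <n, g n> to the one with value <n + 1, g (n + 1)>: s reads g off its own values. Since f
  preserves application, the images of these constants form the orbit of the single
  Y-computable element f s, and such an orbit is Y-computable uniformly in n: Y can search for
  a certificate of the computation of the (n + 1)-st element relative to the join of f s with
  the n-th one, whose odd half is in turn certified one level down. By injectivity the images
  of <n, 0> and <n, 1> differ; searching for a point where they do and comparing with the image
  of <n, chi X n> there decides membership in X relative to Y.
\<close>

section \<open>Oracle computations\<close>

lemma pfst_prod_encode [simp]: "pfst (prod_encode (a, b)) = a"
  by (simp add: pfst_def)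

lemma psnd_prod_encode [simp]: "psnd (prod_encode (a, b)) = b"
  by (simp add: psnd_def)

lemma prod_encode_pfst_psnd [simp]: "prod_encode (pfst x, psnd x) = x"
  by (simp add: pfst_def psnd_def)

lemma pfst_le: "pfst x \<le> x"
  by (metis le_prod_encode_1 prod_encode_pfst_psnd)

lemma psnd_le: "psnd x \<le> x"
  by (metis le_prod_encode_2 prod_encode_pfst_psnd)

lemma phi_rel_functional: "phi_rel Or e x y \<Longrightarrow> phi_rel Or e x y' \<Longrightarrow> y' = y"
proof (induction arbitrary: y' rule: phi_rel.induct)
  case (mu e x k)
  from mu.prems mu.hyps(1) show ?case
  proof cases
    case mu
    show ?thesis
    proof (cases k y' rule: linorder_cases)
      case less
      then obtain v where "0 < v" "phi_rel Or (e div 9) (prod_encode (x, k)) v"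
        using mu(3) by blast
      then show ?thesis using mu.IH(1) by fastforce
    next
      case greater
      then obtain v where "0 < v" "\<And>w. phi_rel Or (e div 9) (prod_encode (x, y')) w \<Longrightarrow> w = v"
        using mu.IH(2) by blast
      then show ?thesis using mu(2) by fastforce
    qed simp
  qed simp_all
next
  case (comp e x z y)
  from comp.prems comp.hyps(1) show ?case
    by cases (auto dest: comp.IH)
next
  case (pair e x y1 y2)
  from pair.prems pair.hyps(1) show ?case
    by cases (auto dest: pair.IH)
next
  case (prec0 e x y)
  from prec0.prems prec0.hyps(1) show ?case
    by cases (auto dest: prec0.IH)
next
  case (precS e x k z y)
  from precS.prems precS.hyps(1) show ?case
    by cases (auto dest: precS.IH)
qed (erule phi_rel.cases; simp)+

lemma Phi_eq_Some_iff: "Phi e Or x = Some y \<longleftrightarrow> phi_rel Or e x y"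
  unfolding Phi_def using phi_rel_functional by (auto intro: theI2)

function subst_oracle :: "nat \<Rightarrow> nat \<Rightarrow> nat" where
  "subst_oracle q e =
    (if e mod 9 = 4 then q
     else if e mod 9 \<in> {5, 6, 7}
       then e mod 9 + 9 * prod_encode (subst_oracle q (pfst (e div 9)), subst_oracle q (psnd (e div 9)))
     else if e mod 9 = 8 then 8 + 9 * subst_oracle q (e div 9)
     else e)"
  by pat_completeness auto
termination
  by (relation "measure snd")
    (auto intro: le_less_trans[OF pfst_le] le_less_trans[OF psnd_le])

declare subst_oracle.simps [simp del]

lemma phi_rel_subst_oracle:
  assumes "phi_rel O1 e x y" and "\<And>n. phi_rel O2 q n (O1 n)"
  shows "phi_rel O2 (subst_oracle q e) x y"
  using assms(1)
proof induction
  case (comp e x z y)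
  then show ?case
    by (subst subst_oracle.simps) (auto intro: phi_rel.comp)
next
  case (pair e x y1 y2)
  then show ?case
    by (subst subst_oracle.simps) (auto intro: phi_rel.pair)
next
  case (prec0 e x y)
  then show ?case
    by (subst subst_oracle.simps) (auto intro: phi_rel.prec0)
next
  case (precS e x k z y)
  have "subst_oracle q e =
      7 + 9 * prod_encode (subst_oracle q (pfst (e div 9)), subst_oracle q (psnd (e div 9)))"
    using precS.hyps(1) by (subst subst_oracle.simps) simp
  with precS.IH show ?case
    by (auto intro: phi_rel.precS)
next
  case (mu e x k)
  then show ?case
    by (subst subst_oracle.simps) (rule phi_rel.mu; auto)
qed (subst subst_oracle.simps; simp add: phi_rel.intros assms(2))+

section \<open>Uniformly computable functions\<close>

definition computable_on :: "(nat \<Rightarrow> nat) set \<Rightarrow> ((nat \<Rightarrow> nat) \<Rightarrow> nat \<Rightarrow> nat) \<Rightarrow> bool" where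
  "computable_on S F \<longleftrightarrow> (\<exists>e. \<forall>Or\<in>S. \<forall>x. phi_rel Or e x (F Or x))"

definition decidable_on :: "(nat \<Rightarrow> nat) set \<Rightarrow> ((nat \<Rightarrow> nat) \<Rightarrow> nat \<Rightarrow> bool) \<Rightarrow> bool" where
  "decidable_on S P \<longleftrightarrow> computable_on S (\<lambda>Or x. if P Or x then 1 else 0)"

lemma computable_in_iff_computable_on: "computable_in Z g \<longleftrightarrow> computable_on {chi Z} (\<lambda>Or. g)"
  unfolding computable_in_def computable_on_def by (simp add: Phi_eq_Some_iff)

lemma computable_on_cong:
  "computable_on S F \<Longrightarrow> (\<And>Or x. Or \<in> S \<Longrightarrow> F Or x = G Or x) \<Longrightarrow> computable_on S G"
  unfolding computable_on_def by auto

lemma computable_on_zero: "computable_on S (\<lambda>Or x. 0)"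
  unfolding computable_on_def by (rule exI[of _ 0]) (simp add: phi_rel.zero)

lemma computable_on_Suc_arg: "computable_on S (\<lambda>Or x. Suc x)"
  unfolding computable_on_def by (rule exI[of _ 1]) (simp add: phi_rel.succ)

lemma computable_on_pfst_arg: "computable_on S (\<lambda>Or x. pfst x)"
  unfolding computable_on_def by (rule exI[of _ 2]) (simp add: phi_rel.proj1)

lemma computable_on_psnd_arg: "computable_on S (\<lambda>Or x. psnd x)"
  unfolding computable_on_def by (rule exI[of _ 3]) (simp add: phi_rel.proj2)

lemma computable_on_oracle_arg: "computable_on S (\<lambda>Or x. Or x)"
  unfolding computable_on_def by (rule exI[of _ 4]) (simp add: phi_rel.orc)

lemma computable_on_comp:
  assumes "computable_on S F" and "computable_on S G"
  shows "computable_on S (\<lambda>Or x. F Or (G Or x))"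
proof -
  obtain a b where a: "\<And>Or x. Or \<in> S \<Longrightarrow> phi_rel Or a x (F Or x)"
    and b: "\<And>Or x. Or \<in> S \<Longrightarrow> phi_rel Or b x (G Or x)"
    using assms unfolding computable_on_def by blast
  have "phi_rel Or (5 + 9 * prod_encode (a, b)) x (F Or (G Or x))" if "Or \<in> S" for Or x
    by (rule phi_rel.comp[where z = "G Or x"]) (simp_all add: a b that)
  then show ?thesis unfolding computable_on_def by blast
qed

lemma computable_on_pair:
  assumes "computable_on S F" and "computable_on S G"
  shows "computable_on S (\<lambda>Or x. prod_encode (F Or x, G Or x))"
proof -
  obtain a b where a: "\<And>Or x. Or \<in> S \<Longrightarrow> phi_rel Or a x (F Or x)"
    and b: "\<And>Or x. Or \<in> S \<Longrightarrow> phi_rel Or b x (G Or x)"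
    using assms unfolding computable_on_def by blast
  have "phi_rel Or (6 + 9 * prod_encode (a, b)) x (prod_encode (F Or x, G Or x))" if "Or \<in> S" for Or x
    by (rule phi_rel.pair) (simp_all add: a b that)
  then show ?thesis unfolding computable_on_def by blast
qed

lemma computable_on_rec_nat:
  assumes "computable_on S B"
    and "computable_on S (\<lambda>Or z. R Or (pfst z) (pfst (psnd z)) (psnd (psnd z)))"
  shows "computable_on S (\<lambda>Or z. rec_nat (B Or (pfst z)) (R Or (pfst z)) (psnd z))"
proof -
  obtain a c where a: "\<And>Or x. Or \<in> S \<Longrightarrow> phi_rel Or a x (B Or x)"
    and c: "\<And>Or z. Or \<in> S \<Longrightarrow> phi_rel Or c z (R Or (pfst z) (pfst (psnd z)) (psnd (psnd z)))"
    using assms unfolding computable_on_def by blast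
  define e where "e = 7 + 9 * prod_encode (a, c)"
  have e: "e mod 9 = 7" "e div 9 = prod_encode (a, c)"
    unfolding e_def by simp_all
  have "phi_rel Or e (prod_encode (x, k)) (rec_nat (B Or x) (R Or x) k)" if "Or \<in> S" for Or x k
  proof (induction k)
    case 0
    show ?case using phi_rel.prec0[OF e(1)] a[OF that] by (simp add: e(2))
  next
    case (Suc k)
    let ?r = "rec_nat (B Or x) (R Or x) k"
    have "phi_rel Or (psnd (e div 9)) (prod_encode (x, prod_encode (k, ?r))) (R Or x k ?r)"
      using c[OF that, of "prod_encode (x, prod_encode (k, ?r))"] by (simp add: e(2))
    then show ?case using phi_rel.precS[OF e(1) Suc] by simp
  qed
  then have "phi_rel Or e z (rec_nat (B Or (pfst z)) (R Or (pfst z)) (psnd z))" if "Or \<in> S" for Or z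
    using that by (metis prod_encode_pfst_psnd)
  then show ?thesis unfolding computable_on_def by blast
qed

lemma computable_on_Least:
  assumes "computable_on S H" and "\<And>Or x. Or \<in> S \<Longrightarrow> \<exists>k. H Or (prod_encode (x, k)) = 0"
  shows "computable_on S (\<lambda>Or x. LEAST k. H Or (prod_encode (x, k)) = 0)"
proof -
  obtain a where a: "\<And>Or x. Or \<in> S \<Longrightarrow> phi_rel Or a x (H Or x)"
    using assms(1) unfolding computable_on_def by blast
  have "phi_rel Or (8 + 9 * a) x (LEAST k. H Or (prod_encode (x, k)) = 0)" if "Or \<in> S" for Or x
  proof (rule phi_rel.mu)
    let ?k = "LEAST k. H Or (prod_encode (x, k)) = 0"
    have "H Or (prod_encode (x, ?k)) = 0"
      using assms(2)[OF that] by (rule LeastI_ex)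
    then show "phi_rel Or ((8 + 9 * a) div 9) (prod_encode (x, ?k)) 0"
      using a[OF that, of "prod_encode (x, ?k)"] by simp
    have "H Or (prod_encode (x, j)) \<noteq> 0" if "j < ?k" for j
      using that by (rule not_less_Least)
    then show "\<forall>j<?k. \<exists>v>0. phi_rel Or ((8 + 9 * a) div 9) (prod_encode (x, j)) v"
      using a[OF that] by auto
  qed simp
  then show ?thesis unfolding computable_on_def by blast
qed

lemma computable_on_const: "computable_on S (\<lambda>Or x. c)"
proof (induction c)
  case (Suc c)
  then show ?case using computable_on_comp[OF computable_on_Suc_arg] by simp
qed (rule computable_on_zero)

lemma computable_on_Suc: "computable_on S F \<Longrightarrow> computable_on S (\<lambda>Or x. Suc (F Or x))"
  using computable_on_comp[OF computable_on_Suc_arg] by simp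

lemma computable_on_pfst: "computable_on S F \<Longrightarrow> computable_on S (\<lambda>Or x. pfst (F Or x))"
  using computable_on_comp[OF computable_on_pfst_arg] by simp

lemma computable_on_psnd: "computable_on S F \<Longrightarrow> computable_on S (\<lambda>Or x. psnd (F Or x))"
  using computable_on_comp[OF computable_on_psnd_arg] by simp

lemma computable_on_oracle: "computable_on S F \<Longrightarrow> computable_on S (\<lambda>Or x. Or (F Or x))"
  using computable_on_comp[OF computable_on_oracle_arg] by simp

lemma computable_on_psnd_pred: "computable_on S (\<lambda>Or z. psnd z - 1)"
proof -
  have "rec_nat 0 (\<lambda>k r. k) y = y - 1" for y :: nat
    by (cases y) auto
  then show ?thesis
    using computable_on_rec_nat[OF computable_on_zero computable_on_pfst[OF computable_on_psnd_arg]]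
    by simp
qed

lemma computable_on_id: "computable_on S (\<lambda>Or x. x)"
  using computable_on_comp[OF computable_on_psnd_pred
      computable_on_pair[OF computable_on_zero computable_on_Suc_arg]]
  by simp

lemma computable_on_binop:
  assumes "computable_on S (\<lambda>Or z. F Or (pfst z) (psnd z))"
    and "computable_on S G" and "computable_on S H"
  shows "computable_on S (\<lambda>Or x. F Or (G Or x) (H Or x))"
  using computable_on_comp[OF assms(1) computable_on_pair[OF assms(2,3)]] by simp

lemma computable_on_add:
  assumes "computable_on S G" and "computable_on S H"
  shows "computable_on S (\<lambda>Or x. G Or x + H Or x)"
proof (rule computable_on_binop[OF _ assms])
  have "rec_nat x (\<lambda>k r. Suc r) y = x + y" for x y :: nat
    by (induction y) auto
  then show "computable_on S (\<lambda>Or z. pfst z + psnd z)"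
    using computable_on_rec_nat[of S "\<lambda>Or x. x" "\<lambda>Or x k r. Suc r"]
    by (simp add: computable_on_id computable_on_Suc computable_on_psnd computable_on_psnd_arg)
qed

lemma computable_on_diff:
  assumes "computable_on S G" and "computable_on S H"
  shows "computable_on S (\<lambda>Or x. G Or x - H Or x)"
proof (rule computable_on_binop[OF _ assms])
  have pred: "computable_on S (\<lambda>Or x. x - 1)"
    using computable_on_comp[OF computable_on_psnd_pred
        computable_on_pair[OF computable_on_zero computable_on_id]]
    by simp
  have "rec_nat x (\<lambda>k r. r - 1) y = x - y" for x y :: nat
    by (induction y) auto
  then show "computable_on S (\<lambda>Or z. pfst z - psnd z)"
    using computable_on_rec_nat[of S "\<lambda>Or x. x" "\<lambda>Or x k r. r - 1"]
      computable_on_comp[OF pred computable_on_psnd[OF computable_on_psnd_arg]]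
    by (simp add: computable_on_id)
qed

lemma computable_on_mult:
  assumes "computable_on S G" and "computable_on S H"
  shows "computable_on S (\<lambda>Or x. G Or x * H Or x)"
proof (rule computable_on_binop[OF _ assms])
  have "rec_nat 0 (\<lambda>k r. r + x) y = x * y" for x y :: nat
    by (induction y) auto
  then show "computable_on S (\<lambda>Or z. pfst z * psnd z)"
    using computable_on_rec_nat[of S "\<lambda>Or x. 0" "\<lambda>Or x k r. r + x"]
    by (simp add: computable_on_zero computable_on_add computable_on_psnd computable_on_psnd_arg
        computable_on_pfst_arg)
qed

lemma computable_on_funpow_psnd:
  assumes "computable_on S G" and "computable_on S H"
  shows "computable_on S (\<lambda>Or x. (psnd ^^ G Or x) (H Or x))"
proof -
  have "rec_nat x (\<lambda>k r. psnd r) y = (psnd ^^ y) x" for x y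
    by (induction y) auto
  then have "computable_on S (\<lambda>Or z. (psnd ^^ psnd z) (pfst z))"
    using computable_on_rec_nat[of S "\<lambda>Or x. x" "\<lambda>Or x k r. psnd r"]
    by (simp add: computable_on_id computable_on_psnd computable_on_psnd_arg)
  from computable_on_binop[OF this assms(2,1)] show ?thesis .
qed

lemma computable_on_If:
  assumes "decidable_on S P" and "computable_on S G" and "computable_on S H"
  shows "computable_on S (\<lambda>Or x. if P Or x then G Or x else H Or x)"
proof -
  let ?b = "\<lambda>Or x. if P Or x then 1 else 0 :: nat"
  have "computable_on S (\<lambda>Or x. ?b Or x * G Or x + (1 - ?b Or x) * H Or x)"
    using assms unfolding decidable_on_def
    by (intro computable_on_add computable_on_mult computable_on_diff computable_on_const)
  then show ?thesis by (rule computable_on_cong) simp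
qed

lemma decidable_on_eq:
  assumes "computable_on S G" and "computable_on S H"
  shows "decidable_on S (\<lambda>Or x. G Or x = H Or x)"
  unfolding decidable_on_def
proof (rule computable_on_cong)
  show "computable_on S (\<lambda>Or x. 1 - ((G Or x - H Or x) + (H Or x - G Or x)))"
    by (intro computable_on_diff computable_on_add computable_on_const assms)
qed auto

lemma decidable_on_less:
  assumes "computable_on S G" and "computable_on S H"
  shows "decidable_on S (\<lambda>Or x. G Or x < H Or x)"
  unfolding decidable_on_def
proof (rule computable_on_cong)
  show "computable_on S (\<lambda>Or x. 1 - (1 - (H Or x - G Or x)))"
    by (intro computable_on_diff computable_on_const assms)
qed auto

lemma decidable_on_le:
  assumes "computable_on S G" and "computable_on S H"
  shows "decidable_on S (\<lambda>Or x. G Or x \<le> H Or x)"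
  unfolding decidable_on_def
proof (rule computable_on_cong)
  show "computable_on S (\<lambda>Or x. 1 - (G Or x - H Or x))"
    by (intro computable_on_diff computable_on_const assms)
qed auto

lemma decidable_on_If:
  assumes "decidable_on S P" and "decidable_on S Q" and "decidable_on S R"
  shows "decidable_on S (\<lambda>Or x. if P Or x then Q Or x else R Or x)"
  using computable_on_If[OF assms(1) assms(2,3)[unfolded decidable_on_def]]
  unfolding decidable_on_def by (rule computable_on_cong) simp

lemma decidable_on_cong:
  "decidable_on S P \<Longrightarrow> (\<And>Or x. Or \<in> S \<Longrightarrow> P Or x = Q Or x) \<Longrightarrow> decidable_on S Q"
  unfolding decidable_on_def by (erule computable_on_cong) simp

lemma decidable_on_const: "decidable_on S (\<lambda>Or x. b)"
  unfolding decidable_on_def by (rule computable_on_const)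

lemma decidable_on_not:
  assumes "decidable_on S P"
  shows "decidable_on S (\<lambda>Or x. \<not> P Or x)"
proof (rule decidable_on_cong)
  show "decidable_on S (\<lambda>Or x. if P Or x then False else True)"
    by (intro decidable_on_If assms decidable_on_const)
qed simp

lemma decidable_on_conj:
  assumes "decidable_on S P" and "decidable_on S Q"
  shows "decidable_on S (\<lambda>Or x. P Or x \<and> Q Or x)"
proof (rule decidable_on_cong)
  show "decidable_on S (\<lambda>Or x. if P Or x then Q Or x else False)"
    by (intro decidable_on_If assms decidable_on_const)
qed simp

lemma decidable_on_disj:
  assumes "decidable_on S P" and "decidable_on S Q"
  shows "decidable_on S (\<lambda>Or x. P Or x \<or> Q Or x)"
proof (rule decidable_on_cong)
  show "decidable_on S (\<lambda>Or x. if P Or x then True else Q Or x)"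
    by (intro decidable_on_If assms decidable_on_const)
qed simp

lemma decidable_on_imp:
  assumes "decidable_on S P" and "decidable_on S Q"
  shows "decidable_on S (\<lambda>Or x. P Or x \<longrightarrow> Q Or x)"
proof (rule decidable_on_cong)
  show "decidable_on S (\<lambda>Or x. if P Or x then Q Or x else True)"
    by (intro decidable_on_If assms decidable_on_const)
qed simp

lemma computable_on_Least_pred:
  assumes "decidable_on S (\<lambda>Or z. P (pfst z) (psnd z))" and "\<And>x. \<exists>k. P x k"
  shows "computable_on S (\<lambda>Or x. LEAST k. P x k)"
proof -
  let ?H = "\<lambda>Or z. if P (pfst z) (psnd z) then 0 else 1 :: nat"
  have "computable_on S (\<lambda>Or x. LEAST k. ?H Or (prod_encode (x, k)) = 0)"
  proof (rule computable_on_Least)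
    show "computable_on S ?H"
      by (intro computable_on_If assms(1) computable_on_const)
  qed (use assms(2) in auto)
  moreover have "(\<lambda>k. ?H Or (prod_encode (x, k)) = 0) = P x" for Or x
    by auto
  ultimately show ?thesis
    by simp
qed

lemma computable_on_div:
  assumes "computable_on S G" and "computable_on S H"
  shows "computable_on S (\<lambda>Or x. G Or x div H Or x)"
proof (rule computable_on_binop[OF _ assms])
  let ?P = "\<lambda>z q. pfst z < (q + 1) * psnd z \<or> psnd z = 0"
  have "computable_on S (\<lambda>Or z. LEAST q. ?P z q)"
  proof (rule computable_on_Least_pred)
    show "\<exists>q. ?P z q" for z
      by (rule exI[of _ "pfst z"]) (cases "psnd z"; simp)
  qed (intro decidable_on_disj decidable_on_less decidable_on_eq computable_on_mult computable_on_add
      computable_on_pfst computable_on_psnd computable_on_id computable_on_const)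
  moreover have "(LEAST q. ?P z q) = pfst z div psnd z" for z
  proof (cases "psnd z = 0")
    case False
    show ?thesis
    proof (rule Least_equality)
      show "?P z (pfst z div psnd z)"
        using False dividend_less_div_times[of "psnd z" "pfst z"] by simp
      show "pfst z div psnd z \<le> q" if "?P z q" for q
        using that False less_mult_imp_div_less[of "pfst z" "q + 1" "psnd z"] by simp
    qed
  qed simp
  ultimately show "computable_on S (\<lambda>Or z. pfst z div psnd z)"
    by simp
qed

lemma computable_on_mod:
  assumes "computable_on S G" and "computable_on S H"
  shows "computable_on S (\<lambda>Or x. G Or x mod H Or x)"
proof (rule computable_on_cong)
  show "computable_on S (\<lambda>Or x. G Or x - G Or x div H Or x * H Or x)"
    by (intro computable_on_diff computable_on_mult computable_on_div assms)
qed (simp add: minus_div_mult_eq_mod)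

lemma decidable_on_even: "computable_on S G \<Longrightarrow> decidable_on S (\<lambda>Or x. even (G Or x))"
  using decidable_on_eq[OF computable_on_mod[OF _ computable_on_const] computable_on_const, of S G 2 0]
  by (simp add: even_iff_mod_2_eq_zero)

lemmas computable_on_intros =
  computable_on_If decidable_on_If decidable_on_conj decidable_on_disj decidable_on_not decidable_on_imp
  decidable_on_eq decidable_on_less decidable_on_le decidable_on_even
  computable_on_add computable_on_diff computable_on_mult computable_on_div computable_on_mod
  computable_on_funpow_psnd computable_on_pfst computable_on_psnd computable_on_pair computable_on_Suc
  computable_on_oracle computable_on_id computable_on_const

section \<open>Certificates for iterated oracle computations\<close>

definition cert :: "nat \<Rightarrow> nat \<Rightarrow> nat \<Rightarrow> nat \<Rightarrow> nat" where
  "cert t h s1 s2 = prod_encode (t, prod_encode (h, prod_encode (s1, s2)))"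

definition claim :: "nat \<Rightarrow> nat \<Rightarrow> nat \<Rightarrow> nat \<Rightarrow> nat" where
  "claim n p x y = prod_encode (n, prod_encode (p, prod_encode (x, y)))"

definition cert_rule :: "nat \<Rightarrow> nat" where "cert_rule c = pfst c"
definition cert_claim :: "nat \<Rightarrow> nat" where "cert_claim c = pfst (psnd c)"
definition cert_sub1 :: "nat \<Rightarrow> nat" where "cert_sub1 c = pfst (psnd (psnd c))"
definition cert_sub2 :: "nat \<Rightarrow> nat" where "cert_sub2 c = psnd (psnd (psnd c))"
definition claim_level :: "nat \<Rightarrow> nat" where "claim_level h = pfst h"
definition claim_index :: "nat \<Rightarrow> nat" where "claim_index h = pfst (psnd h)"
definition claim_input :: "nat \<Rightarrow> nat" where "claim_input h = pfst (psnd (psnd h))"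
definition claim_output :: "nat \<Rightarrow> nat" where "claim_output h = psnd (psnd (psnd h))"

lemmas cert_field_defs = cert_rule_def cert_claim_def cert_sub1_def cert_sub2_def
  claim_level_def claim_index_def claim_input_def claim_output_def

lemma cert_fields [simp]:
  "cert_rule (cert t h s1 s2) = t" "cert_claim (cert t h s1 s2) = h"
  "cert_sub1 (cert t h s1 s2) = s1" "cert_sub2 (cert t h s1 s2) = s2"
  by (simp_all add: cert_def cert_field_defs)

lemma claim_fields [simp]:
  "claim_level (claim n p x y) = n" "claim_index (claim n p x y) = p"
  "claim_input (claim n p x y) = x" "claim_output (claim n p x y) = y"
  by (simp_all add: claim_def cert_field_defs)

lemma cert_sub_less:
  assumes "0 < t"
  shows "s1 < cert t h s1 s2" and "s2 < cert t h s1 s2"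
proof -
  have triangle_ge: "k \<le> triangle k" for k
    by (induction k) auto
  have "r < prod_encode (t, r)" for r
  proof -
    have "r \<le> triangle (t + r)"
      using triangle_ge[of "t + r"] by linarith
    then show ?thesis
      using assms by (simp add: prod_encode_def)
  qed
  then have "prod_encode (s1, s2) < cert t h s1 s2"
    unfolding cert_def by (meson le_less_trans le_prod_encode_2)
  then show "s1 < cert t h s1 s2" and "s2 < cert t h s1 s2"
    by (meson le_less_trans le_prod_encode_1 le_prod_encode_2)+
qed

definition certifies :: "(nat \<Rightarrow> bool) \<Rightarrow> nat \<Rightarrow> nat \<Rightarrow> nat \<Rightarrow> nat \<Rightarrow> nat \<Rightarrow> bool" where
  "certifies V s n p x y \<longleftrightarrow> V s \<and> 1 \<le> cert_rule s \<and> cert_rule s \<le> 10 \<and> cert_claim s = claim n p x y"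

definition certifies_positive :: "(nat \<Rightarrow> bool) \<Rightarrow> nat \<Rightarrow> nat \<Rightarrow> nat \<Rightarrow> nat \<Rightarrow> nat \<Rightarrow> bool" where
  "certifies_positive V s n p x k \<longleftrightarrow> V s \<and> cert_rule s = 11 \<and> cert_claim s = claim n p x k"

text \<open>
  A valid certificate cert t (claim n p x y) s1 s2 with 1 \<le> t \<le> 10 witnesses
  phi_rel (join a (u n)) p x y (see the locale below) by the t-th introduction rule of phi_rel,
  s1 and s2 certifying its premises; with t = 11 it witnesses the side condition of the mu rule
  that all values below y are positive. The odd half of the oracle is v = u 0 at level 0 and is
  certified one level down otherwise.
\<close>

definition cert_check :: "(nat \<Rightarrow> nat) \<Rightarrow> (nat \<Rightarrow> nat) \<Rightarrow> (nat \<Rightarrow> bool) \<Rightarrow> nat \<Rightarrow> bool" where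
  "cert_check a v V c \<longleftrightarrow>
    (let t = cert_rule c; n = claim_level (cert_claim c); p = claim_index (cert_claim c);
       x = claim_input (cert_claim c); y = claim_output (cert_claim c);
       s1 = cert_sub1 c; s2 = cert_sub2 c;
       y1 = claim_output (cert_claim s1); y2 = claim_output (cert_claim s2) in
     s1 < c \<and> s2 < c \<and> 1 \<le> t \<and> t \<le> 11 \<and>
     (t = 1 \<longrightarrow> p mod 9 = 0 \<and> y = 0) \<and>
     (t = 2 \<longrightarrow> p mod 9 = 1 \<and> y = Suc x) \<and>
     (t = 3 \<longrightarrow> p mod 9 = 2 \<and> y = pfst x) \<and>
     (t = 4 \<longrightarrow> p mod 9 = 3 \<and> y = psnd x) \<and>
     (t = 5 \<longrightarrow> p mod 9 = 4 \<and>
        (if even x then y = a (x div 2)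
         else if n = 0 then y = v (x div 2)
         else certifies V s1 (n - 1) (a 0) (x div 2) y)) \<and>
     (t = 6 \<longrightarrow> p mod 9 = 5 \<and>
        certifies V s1 n (psnd (p div 9)) x y1 \<and> certifies V s2 n (pfst (p div 9)) y1 y) \<and>
     (t = 7 \<longrightarrow> p mod 9 = 6 \<and>
        certifies V s1 n (pfst (p div 9)) x y1 \<and> certifies V s2 n (psnd (p div 9)) x y2 \<and>
        y = prod_encode (y1, y2)) \<and>
     (t = 8 \<longrightarrow> p mod 9 = 7 \<and> psnd x = 0 \<and> certifies V s1 n (pfst (p div 9)) (pfst x) y) \<and>
     (t = 9 \<longrightarrow> p mod 9 = 7 \<and> 0 < psnd x \<and>
        certifies V s1 n p (prod_encode (pfst x, psnd x - 1)) y1 \<and>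
        certifies V s2 n (psnd (p div 9)) (prod_encode (pfst x, prod_encode (psnd x - 1, y1))) y) \<and>
     (t = 10 \<longrightarrow> p mod 9 = 8 \<and>
        certifies V s1 n (p div 9) (prod_encode (x, y)) 0 \<and> certifies_positive V s2 n (p div 9) x y) \<and>
     (t = 11 \<longrightarrow> y = 0 \<or>
        certifies_positive V s1 n p x (y - 1) \<and> certifies V s2 n p (prod_encode (x, y - 1)) y2 \<and> 0 < y2))"

text \<open>
  Sub-certificates have smaller codes, so validity is defined by course-of-values recursion:
  validity_history a v c packs the validity bits of all codes below c.
\<close>

definition history_bit :: "nat \<Rightarrow> nat \<Rightarrow> nat \<Rightarrow> bool" where
  "history_bit h c s \<longleftrightarrow> pfst ((psnd ^^ (c - 1 - s)) h) = 1"

primrec validity_history :: "(nat \<Rightarrow> nat) \<Rightarrow> (nat \<Rightarrow> nat) \<Rightarrow> nat \<Rightarrow> nat" where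
  "validity_history a v 0 = 0"
| "validity_history a v (Suc c) =
    prod_encode (if cert_check a v (history_bit (validity_history a v c) c) c then 1 else 0,
                 validity_history a v c)"

definition valid_cert :: "(nat \<Rightarrow> nat) \<Rightarrow> (nat \<Rightarrow> nat) \<Rightarrow> nat \<Rightarrow> bool" where
  "valid_cert a v c \<longleftrightarrow> cert_check a v (history_bit (validity_history a v c) c) c"

lemma funpow_psnd_validity_history:
  "k \<le> c \<Longrightarrow> (psnd ^^ k) (validity_history a v c) = validity_history a v (c - k)"
proof (induction k)
  case (Suc k)
  then have "c - k = Suc (c - Suc k)"
    by simp
  with Suc show ?case
    by simp
qed simp

lemma history_bit_validity_history:
  "s < c \<Longrightarrow> history_bit (validity_history a v c) c s \<longleftrightarrow> valid_cert a v s"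
  using funpow_psnd_validity_history[of "c - 1 - s" c a v]
  by (simp add: history_bit_def valid_cert_def Suc_diff_Suc)

lemma cert_check_cong:
  assumes "\<And>s. s < c \<Longrightarrow> V s = W s"
  shows "cert_check a v V c = cert_check a v W c"
proof (cases "cert_sub1 c < c \<and> cert_sub2 c < c")
  case True
  then have "V (cert_sub1 c) = W (cert_sub1 c)" and "V (cert_sub2 c) = W (cert_sub2 c)"
    using assms by auto
  then show ?thesis
    unfolding cert_check_def Let_def certifies_def certifies_positive_def by simp
qed (auto simp: cert_check_def Let_def)

lemma valid_cert_iff: "valid_cert a v c \<longleftrightarrow> cert_check a v (valid_cert a v) c"
  unfolding valid_cert_def[of a v c]
  by (rule cert_check_cong) (simp add: history_bit_validity_history)

lemma decidable_on_cert_check: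
  assumes "computable_on S (\<lambda>Or. a)" and "computable_on S (\<lambda>Or. v)"
    and "computable_on S H" and "computable_on S C"
  shows "decidable_on S (\<lambda>Or x. cert_check a v (history_bit (H Or x) (C Or x)) (C Or x))"
proof -
  have a: "computable_on S (\<lambda>Or x. a (G Or x))" and v: "computable_on S (\<lambda>Or x. v (G Or x))"
    if "computable_on S G" for G
    using computable_on_comp[OF assms(1) that] computable_on_comp[OF assms(2) that] by simp_all
  show ?thesis
    unfolding cert_check_def Let_def certifies_def certifies_positive_def history_bit_def
      cert_field_defs claim_def
    by (intro computable_on_intros assms(3,4) a v)
qed

lemma computable_on_validity_history:
  assumes "computable_on S (\<lambda>Or. a)" and "computable_on S (\<lambda>Or. v)"
  shows "computable_on S (\<lambda>Or c. validity_history a v c)"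
proof -
  let ?step = "\<lambda>c h. prod_encode (if cert_check a v (history_bit h c) c then 1 else 0, h)"
  have "validity_history a v c = rec_nat 0 ?step c" for c
    by (induction c) auto
  moreover have "computable_on S (\<lambda>Or z. rec_nat 0 ?step (psnd z))"
    using computable_on_rec_nat[of S "\<lambda>Or x. 0" "\<lambda>Or x. ?step"]
    by (simp add: computable_on_const computable_on_pair computable_on_If computable_on_psnd
        computable_on_pfst computable_on_id decidable_on_cert_check[OF assms])
  ultimately show ?thesis
    using computable_on_comp[OF _ computable_on_pair[OF computable_on_const computable_on_id]]
    by fastforce
qed

lemma decidable_on_valid_cert:
  assumes "computable_on S (\<lambda>Or. a)" and "computable_on S (\<lambda>Or. v)" and "computable_on S G"
  shows "decidable_on S (\<lambda>Or x. valid_cert a v (G Or x))"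
  unfolding valid_cert_def
  using decidable_on_cert_check[OF assms(1,2)
      computable_on_comp[OF computable_on_validity_history[OF assms(1,2)] assms(3)] assms(3)] .

lemma cert_cases:
  obtains t n p x y s1 s2 where "c = cert t (claim n p x y) s1 s2"
proof
  show "c = cert (cert_rule c)
      (claim (claim_level (cert_claim c)) (claim_index (cert_claim c)) (claim_input (cert_claim c))
        (claim_output (cert_claim c)))
      (cert_sub1 c) (cert_sub2 c)"
    by (simp add: cert_def claim_def cert_field_defs)
qed

locale iterated_application =
  fixes a :: "nat \<Rightarrow> nat" and u :: "nat \<Rightarrow> nat \<Rightarrow> nat"
  assumes step: "phi_rel (join a (u n)) (a 0) m (u (Suc n) m)"
begin

abbreviation level :: "nat \<Rightarrow> nat \<Rightarrow> nat" where
  "level n \<equiv> join a (u n)"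

abbreviation valid :: "nat \<Rightarrow> bool" where
  "valid \<equiv> valid_cert a (u 0)"

lemma step_output: "phi_rel (level n) (a 0) x y \<Longrightarrow> y = u (Suc n) x"
  using phi_rel_functional step by blast

lemma check_sound_basic:
  assumes check: "cert_check a (u 0) V (cert t (claim n p x y) s1 s2)" and t: "1 \<le> t" "t \<le> 5"
    and sub1: "\<And>n p x y. certifies V s1 n p x y \<Longrightarrow> phi_rel (level n) p x y"
  shows "phi_rel (level n) p x y"
proof -
  consider "t \<le> 4" | "t = 5"
    using t by linarith
  then show ?thesis
  proof cases
    case 1
    then consider "t = 1" | "t = 2" | "t = 3" | "t = 4"
      using t by linarith
    then show ?thesis
      using check unfolding cert_check_def Let_def
      by cases (simp_all add: phi_rel.zero phi_rel.succ phi_rel.proj1 phi_rel.proj2)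
  next
    case 2
    then have idx: "p mod 9 = 4" and answer: "if even x then y = a (x div 2)
        else if n = 0 then y = u 0 (x div 2) else certifies V s1 (n - 1) (a 0) (x div 2) y"
      using check unfolding cert_check_def Let_def by auto
    have "y = level n x"
    proof (cases "even x \<or> n = 0")
      case False
      then have "certifies V s1 (n - 1) (a 0) (x div 2) y"
        using answer by auto
      then have "y = u (Suc (n - 1)) (x div 2)"
        by (rule step_output[OF sub1])
      with False show ?thesis
        by (simp add: join_def)
    qed (use answer in \<open>auto simp: join_def\<close>)
    then show ?thesis
      using phi_rel.orc[OF idx] by simp
  qed
qed

lemma check_sound_compound:
  assumes check: "cert_check a (u 0) V (cert t (claim n p x y) s1 s2)" and t: "6 \<le> t" "t \<le> 10"
    and sub1: "\<And>n p x y. certifies V s1 n p x y \<Longrightarrow> phi_rel (level n) p x y"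
    and sub2: "\<And>n p x y. certifies V s2 n p x y \<Longrightarrow> phi_rel (level n) p x y"
    and pos2: "\<And>n p x k. certifies_positive V s2 n p x k \<Longrightarrow>
      \<forall>j<k. \<exists>v>0. phi_rel (level n) p (prod_encode (x, j)) v"
  shows "phi_rel (level n) p x y"
proof -
  let ?y1 = "claim_output (cert_claim s1)" and ?y2 = "claim_output (cert_claim s2)"
  consider "t = 6" | "t = 7" | "t = 8" | "t = 9" | "t = 10"
    using t by linarith
  then show ?thesis
  proof cases
    case 1
    then have idx: "p mod 9 = 5" and c1: "certifies V s1 n (psnd (p div 9)) x ?y1"
      and c2: "certifies V s2 n (pfst (p div 9)) ?y1 y"
      using check unfolding cert_check_def Let_def by auto
    show ?thesis
      by (rule phi_rel.comp[OF idx sub1[OF c1] sub2[OF c2]])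
  next
    case 2
    then have idx: "p mod 9 = 6" and c1: "certifies V s1 n (pfst (p div 9)) x ?y1"
      and c2: "certifies V s2 n (psnd (p div 9)) x ?y2" and "y = prod_encode (?y1, ?y2)"
      using check unfolding cert_check_def Let_def by auto
    then show ?thesis
      using phi_rel.pair[OF idx sub1[OF c1] sub2[OF c2]] by simp
  next
    case 3
    then have idx: "p mod 9 = 7" and "psnd x = 0" and c1: "certifies V s1 n (pfst (p div 9)) (pfst x) y"
      using check unfolding cert_check_def Let_def by auto
    then have "x = prod_encode (pfst x, 0)"
      by (metis prod_encode_pfst_psnd)
    then show ?thesis
      using phi_rel.prec0[OF idx sub1[OF c1]] by simp
  next
    case 4
    then have idx: "p mod 9 = 7" and "0 < psnd x"
      and c1: "certifies V s1 n p (prod_encode (pfst x, psnd x - 1)) ?y1"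
      and c2: "certifies V s2 n (psnd (p div 9)) (prod_encode (pfst x, prod_encode (psnd x - 1, ?y1))) y"
      using check unfolding cert_check_def Let_def by auto
    then have "x = prod_encode (pfst x, Suc (psnd x - 1))"
      by simp
    then show ?thesis
      using phi_rel.precS[OF idx sub1[OF c1] sub2[OF c2]] by simp
  next
    case 5
    then have idx: "p mod 9 = 8" and c1: "certifies V s1 n (p div 9) (prod_encode (x, y)) 0"
      and c2: "certifies_positive V s2 n (p div 9) x y"
      using check unfolding cert_check_def Let_def by auto
    show ?thesis
      by (rule phi_rel.mu[OF idx sub1[OF c1] pos2[OF c2]])
  qed
qed

lemma check_sound_positive:
  assumes check: "cert_check a (u 0) V (cert 11 (claim n p x y) s1 s2)"
    and sub2: "\<And>n p x y. certifies V s2 n p x y \<Longrightarrow> phi_rel (level n) p x y"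
    and pos1: "\<And>n p x k. certifies_positive V s1 n p x k \<Longrightarrow>
      \<forall>j<k. \<exists>v>0. phi_rel (level n) p (prod_encode (x, j)) v"
  shows "\<forall>j<y. \<exists>v>0. phi_rel (level n) p (prod_encode (x, j)) v"
proof (cases y)
  case (Suc k)
  let ?y2 = "claim_output (cert_claim s2)"
  have "certifies_positive V s1 n p x k" and "certifies V s2 n p (prod_encode (x, k)) ?y2" and "0 < ?y2"
    using check Suc unfolding cert_check_def Let_def by auto
  then have "\<forall>j<k. \<exists>v>0. phi_rel (level n) p (prod_encode (x, j)) v"
    and "\<exists>v>0. phi_rel (level n) p (prod_encode (x, k)) v"
    using pos1 sub2 by blast+
  then show ?thesis
    using Suc less_Suc_eq by auto
qed simp

definition cert_meaning :: "nat \<Rightarrow> bool" where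
  "cert_meaning c \<longleftrightarrow>
    (let n = claim_level (cert_claim c); p = claim_index (cert_claim c);
       x = claim_input (cert_claim c); y = claim_output (cert_claim c) in
     (1 \<le> cert_rule c \<and> cert_rule c \<le> 10 \<longrightarrow> phi_rel (level n) p x y) \<and>
     (cert_rule c = 11 \<longrightarrow> (\<forall>j<y. \<exists>v>0. phi_rel (level n) p (prod_encode (x, j)) v)))"

lemma valid_cert_meaning: "valid c \<Longrightarrow> cert_meaning c"
proof (induction c rule: less_induct)
  case (less c)
  obtain t n p x y s1 s2 where c: "c = cert t (claim n p x y) s1 s2"
    by (rule cert_cases)
  have check: "cert_check a (u 0) valid (cert t (claim n p x y) s1 s2)"
    using less.prems valid_cert_iff c by blast
  then have "s1 < c" and "s2 < c" and "1 \<le> t" and "t \<le> 11"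
    unfolding c cert_check_def Let_def by auto
  then have "valid s1 \<Longrightarrow> cert_meaning s1" and "valid s2 \<Longrightarrow> cert_meaning s2"
    using less.IH by auto
  then have sub1: "certifies valid s1 n' p' x' y' \<Longrightarrow> phi_rel (level n') p' x' y'"
    and sub2: "certifies valid s2 n' p' x' y' \<Longrightarrow> phi_rel (level n') p' x' y'"
    and pos1: "certifies_positive valid s1 n' p' x' k \<Longrightarrow>
      \<forall>j<k. \<exists>v>0. phi_rel (level n') p' (prod_encode (x', j)) v"
    and pos2: "certifies_positive valid s2 n' p' x' k \<Longrightarrow>
      \<forall>j<k. \<exists>v>0. phi_rel (level n') p' (prod_encode (x', j)) v"
    for n' p' x' y' k
    unfolding certifies_def certifies_positive_def cert_meaning_def Let_def by auto
  have "phi_rel (level n) p x y" if "t \<le> 10"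
  proof (cases "t \<le> 5")
    case True
    then show ?thesis
      using check_sound_basic[OF check \<open>1 \<le> t\<close> _ sub1] by blast
  next
    case False
    then show ?thesis
      using check_sound_compound[OF check _ that sub1 sub2 pos2] by simp
  qed
  moreover have "\<forall>j<y. \<exists>v>0. phi_rel (level n) p (prod_encode (x, j)) v" if "t = 11"
    using check_sound_positive[OF check[unfolded that] sub2 pos1] .
  ultimately show ?case
    unfolding c cert_meaning_def Let_def by auto
qed

lemma certifies_exI:
  assumes "cert_check a (u 0) valid (cert t (claim n p x y) s s')" and "1 \<le> t" and "t \<le> 10"
  shows "\<exists>c. certifies valid c n p x y"
  using assms valid_cert_iff unfolding certifies_def by fastforce

lemma certifies_positive_exI:
  assumes "cert_check a (u 0) valid (cert 11 (claim n p x k) s s')"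
  shows "\<exists>c. certifies_positive valid c n p x k"
  using assms valid_cert_iff unfolding certifies_positive_def by fastforce

lemmas cert_check_simps = cert_check_def Let_def certifies_def certifies_positive_def cert_sub_less

lemma certifies_positive_exists:
  assumes "\<forall>j<k. \<exists>v>0. \<exists>c. certifies valid c n p (prod_encode (x, j)) v"
  shows "\<exists>c. certifies_positive valid c n p x k"
  using assms
proof (induction k)
  case 0
  show ?case
    by (rule certifies_positive_exI[where s = 0 and s' = 0]) (simp add: cert_check_simps)
next
  case (Suc k)
  then obtain c1 where "certifies_positive valid c1 n p x k"
    by auto
  moreover obtain v c2 where "0 < v" and "certifies valid c2 n p (prod_encode (x, k)) v"
    using Suc.prems by blast
  ultimately show ?case
    by (intro certifies_positive_exI[where s = c1 and s' = c2]) (simp add: cert_check_simps)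
qed

lemma oracle_certificate_exists:
  assumes lower: "\<And>p x y. 0 < n \<Longrightarrow> phi_rel (level (n - 1)) p x y \<Longrightarrow>
    \<exists>c. certifies valid c (n - 1) p x y"
    and "p mod 9 = 4"
  shows "\<exists>c. certifies valid c n p x (level n x)"
proof -
  obtain s1 where s1: "odd x \<Longrightarrow> 0 < n \<Longrightarrow> certifies valid s1 (n - 1) (a 0) (x div 2) (level n x)"
  proof (cases "odd x \<and> 0 < n")
    case True
    then have "phi_rel (level (n - 1)) (a 0) (x div 2) (level n x)"
      using step[of "n - 1" "x div 2"] by (simp add: join_def)
    then show ?thesis
      using that lower True by blast
  qed auto
  have "if even x then level n x = a (x div 2) else if n = 0 then level n x = u 0 (x div 2)
      else certifies valid s1 (n - 1) (a 0) (x div 2) (level n x)"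
    using s1 by (auto simp: join_def)
  then show ?thesis
    using assms(2) by (intro certifies_exI[where t = 5 and s = s1 and s' = 0])
      (simp_all add: cert_check_def Let_def cert_sub_less)
qed

lemma certificate_exists_step:
  assumes lower: "\<And>p x y. 0 < n \<Longrightarrow> phi_rel (level (n - 1)) p x y \<Longrightarrow>
    \<exists>c. certifies valid c (n - 1) p x y"
  shows "phi_rel (level n) p x y \<Longrightarrow> \<exists>c. certifies valid c n p x y"
proof (induction rule: phi_rel.induct)
  case (zero e x)
  then show ?case
    by (intro certifies_exI[where t = 1 and s = 0 and s' = 0]) (simp_all add: cert_check_simps)
next
  case (succ e x)
  then show ?case
    by (intro certifies_exI[where t = 2 and s = 0 and s' = 0]) (simp_all add: cert_check_simps)
next
  case (proj1 e x)
  then show ?case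
    by (intro certifies_exI[where t = 3 and s = 0 and s' = 0]) (simp_all add: cert_check_simps)
next
  case (proj2 e x)
  then show ?case
    by (intro certifies_exI[where t = 4 and s = 0 and s' = 0]) (simp_all add: cert_check_simps)
next
  case (orc e x)
  then show ?case
    using oracle_certificate_exists lower by blast
next
  case (comp e x z y)
  then obtain c1 c2 where "certifies valid c1 n (psnd (e div 9)) x z"
    and "certifies valid c2 n (pfst (e div 9)) z y"
    by blast
  with comp.hyps(1) show ?case
    by (intro certifies_exI[where t = 6 and s = c1 and s' = c2]) (simp_all add: cert_check_simps)
next
  case (pair e x y1 y2)
  then obtain c1 c2 where "certifies valid c1 n (pfst (e div 9)) x y1"
    and "certifies valid c2 n (psnd (e div 9)) x y2"
    by blast
  with pair.hyps(1) show ?case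
    by (intro certifies_exI[where t = 7 and s = c1 and s' = c2]) (simp_all add: cert_check_simps)
next
  case (prec0 e x y)
  then obtain c1 where "certifies valid c1 n (pfst (e div 9)) x y"
    by blast
  with prec0.hyps(1) show ?case
    by (intro certifies_exI[where t = 8 and s = c1 and s' = 0]) (simp_all add: cert_check_simps)
next
  case (precS e x k z y)
  then obtain c1 c2 where "certifies valid c1 n e (prod_encode (x, k)) z"
    and "certifies valid c2 n (psnd (e div 9)) (prod_encode (x, prod_encode (k, z))) y"
    by blast
  with precS.hyps(1) show ?case
    by (intro certifies_exI[where t = 9 and s = c1 and s' = c2]) (simp_all add: cert_check_simps)
next
  case (mu e x k)
  obtain c1 where "certifies valid c1 n (e div 9) (prod_encode (x, k)) 0"
    using mu.IH(1) by blast
  moreover obtain c2 where "certifies_positive valid c2 n (e div 9) x k"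
    using mu.IH(2) certifies_positive_exists by blast
  ultimately show ?case
    using mu.hyps(1) by (intro certifies_exI[where t = 10 and s = c1 and s' = c2])
      (simp_all add: cert_check_simps)
qed

lemma certificate_exists: "phi_rel (level n) p x y \<Longrightarrow> \<exists>c. certifies valid c n p x y"
proof (induction n arbitrary: p x y rule: less_induct)
  case (less n)
  then show ?case
    using certificate_exists_step[of n] by simp
qed

lemma computable_on_iterates:
  assumes a: "computable_on S (\<lambda>Or. a)" and u0: "computable_on S (\<lambda>Or. u 0)"
  shows "computable_on S (\<lambda>Or z. u (pfst z) (psnd z))"
proof -
  define found where "found z c \<longleftrightarrow> pfst z = 0 \<or>
    valid c \<and> 1 \<le> cert_rule c \<and> cert_rule c \<le> 10 \<and> claim_level (cert_claim c) = pfst z - 1 \<and>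
    claim_index (cert_claim c) = a 0 \<and> claim_input (cert_claim c) = psnd z" for z c
  have found_exists: "\<exists>c. found z c" for z
  proof (cases "pfst z")
    case (Suc n)
    then show ?thesis
      using certificate_exists[OF step[of n "psnd z"]] by (auto simp: found_def certifies_def)
  qed (simp add: found_def)
  have found_output: "claim_output (cert_claim c) = u (pfst z) (psnd z)" if "found z c" and "0 < pfst z" for z c
  proof -
    have "phi_rel (level (pfst z - 1)) (a 0) (psnd z) (claim_output (cert_claim c))"
      using that valid_cert_meaning[of c] unfolding found_def cert_meaning_def Let_def by auto
    then show ?thesis
      using step_output \<open>0 < pfst z\<close> by fastforce
  qed
  have "decidable_on S (\<lambda>Or w. found (pfst w) (psnd w))"
    unfolding found_def cert_field_defs
    by (intro computable_on_intros decidable_on_valid_cert a u0)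
  then have "computable_on S (\<lambda>Or z. LEAST c. found z c)"
    using found_exists by (rule computable_on_Least_pred)
  then have "computable_on S
      (\<lambda>Or z. if pfst z = 0 then u 0 (psnd z) else claim_output (cert_claim (LEAST c. found z c)))"
    unfolding cert_field_defs by (intro computable_on_intros computable_on_comp[OF u0]) simp_all
  then show ?thesis
    by (rule computable_on_cong) (simp add: found_output LeastI_ex found_exists)
qed

end

section \<open>Embeddings of the pcas K2\<close>

lemma K2_carrier_iff: "g \<in> K2_carrier Z \<longleftrightarrow> computable_on {chi Z} (\<lambda>Or. g)"
  by (simp add: K2_carrier_def computable_in_iff_computable_on)

lemma K2_carrier_const: "(\<lambda>_. c) \<in> K2_carrier Z"
  by (simp add: K2_carrier_iff computable_on_const)

lemma chi_in_K2_carrier: "chi Z \<in> K2_carrier Z"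
  using computable_on_oracle_arg[of "{chi Z}"] by (simp add: K2_carrier_iff computable_on_def)

lemma K2_app_eq_Some_iff: "K2_app g h = Some r \<longleftrightarrow> (\<forall>m. phi_rel (join g h) (g 0) m (r m))"
proof
  assume "K2_app g h = Some r"
  then have "Phi (g 0) (join g h) m = Some (r m)" for m
    by (auto simp: K2_app_def split: if_splits)
  then show "\<forall>m. phi_rel (join g h) (g 0) m (r m)"
    by (simp add: Phi_eq_Some_iff)
next
  assume "\<forall>m. phi_rel (join g h) (g 0) m (r m)"
  then have "Phi (g 0) (join g h) m = Some (r m)" for m
    by (simp add: Phi_eq_Some_iff)
  then show "K2_app g h = Some r"
    by (simp add: K2_app_def)
qed

lemma K2_carrier_mono: "turing_le X Y \<Longrightarrow> K2_carrier X \<subseteq> K2_carrier Y"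
  unfolding turing_le_def K2_carrier_def computable_in_def Phi_eq_Some_iff
  using phi_rel_subst_oracle by blast

lemma pca_embedding_id:
  "turing_le X Y \<Longrightarrow> pca_embedding (K2_carrier X) K2_app (K2_carrier Y) K2_app id"
  unfolding pca_embedding_def using K2_carrier_mono by auto

lemma K2_iterates_computable:
  assumes "s \<in> K2_carrier Z" and "p 0 \<in> K2_carrier Z" and "\<And>n. K2_app s (p n) = Some (p (Suc n))"
  shows "computable_on {chi Z} (\<lambda>Or z. p (pfst z) (psnd z))"
proof -
  interpret iterated_application s p
    using assms(3) by unfold_locales (simp add: K2_app_eq_Some_iff)
  show ?thesis
    using computable_on_iterates assms(1,2) by (simp add: K2_carrier_iff)
qed

lemma K2_shift_applicator:
  assumes "g \<in> K2_carrier Z"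
  obtains s where "s \<in> K2_carrier Z"
    and "\<And>n. K2_app s (\<lambda>_. prod_encode (n, g n)) = Some (\<lambda>_. prod_encode (Suc n, g (Suc n)))"
proof -
  \<comment> \<open>Given s \<oplus> <n, g n>, e reads n at position 1 and g (n + 1) = s (n + 2) at position 2 (n + 2).\<close>
  obtain e where e: "\<And>Or x. phi_rel Or e x (prod_encode (Suc (pfst (Or 1)), Or (2 * pfst (Or 1) + 4)))"
  proof -
    have "computable_on UNIV (\<lambda>Or x. prod_encode (Suc (pfst (Or 1)), Or (2 * pfst (Or 1) + 4)))"
      by (intro computable_on_intros)
    then show ?thesis
      using that unfolding computable_on_def by blast
  qed
  define s where "s j = (if j = 0 then e else g (j - 1))" for j
  have "computable_on {chi Z} (\<lambda>Or j. g (j - 1))"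
    using computable_on_comp[OF assms[unfolded K2_carrier_iff]
        computable_on_diff[OF computable_on_id computable_on_const]]
    by simp
  then have "computable_on {chi Z} (\<lambda>Or j. if j = 0 then e else g (j - 1))"
    by (intro computable_on_intros)
  then have "s \<in> K2_carrier Z"
    unfolding K2_carrier_iff s_def .
  moreover have "K2_app s (\<lambda>_. prod_encode (n, g n)) = Some (\<lambda>_. prod_encode (Suc n, g (Suc n)))" for n
    using e[of "join s (\<lambda>_. prod_encode (n, g n))"]
    by (simp add: K2_app_eq_Some_iff join_def s_def)
  ultimately show ?thesis
    using that by blast
qed

lemma pca_embedding_image_computable:
  assumes emb: "pca_embedding (K2_carrier X) K2_app (K2_carrier Y) K2_app f"
    and g: "g \<in> K2_carrier X"
  shows "computable_on {chi Y} (\<lambda>Or z. f (\<lambda>_. prod_encode (pfst z, g (pfst z))) (psnd z))"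
proof -
  obtain s where s: "s \<in> K2_carrier X"
    and app: "\<And>n. K2_app s (\<lambda>_. prod_encode (n, g n)) = Some (\<lambda>_. prod_encode (Suc n, g (Suc n)))"
    using K2_shift_applicator[OF g] by blast
  let ?p = "\<lambda>n. f (\<lambda>_. prod_encode (n, g n))"
  have "f s \<in> K2_carrier Y" and "?p 0 \<in> K2_carrier Y"
    using emb s K2_carrier_const unfolding pca_embedding_def by auto
  moreover have "K2_app (f s) (?p n) = Some (?p (Suc n))" for n
    using emb s K2_carrier_const app unfolding pca_embedding_def by blast
  ultimately show ?thesis
    by (rule K2_iterates_computable)
qed

lemma decidable_on_choice:
  assumes F0: "computable_on S (\<lambda>Or z. F0 (pfst z) (psnd z))"
    and F1: "computable_on S (\<lambda>Or z. F1 (pfst z) (psnd z))"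
    and G: "computable_on S (\<lambda>Or z. G (pfst z) (psnd z))"
    and distinct: "\<And>n. F0 n \<noteq> F1 n" and choice: "\<And>n. G n = (if B n then F1 n else F0 n)"
  shows "decidable_on S (\<lambda>Or n. B n)"
proof -
  define m where "m n = (LEAST m. F0 n m \<noteq> F1 n m)" for n
  have m: "F0 n (m n) \<noteq> F1 n (m n)" for n
    unfolding m_def by (rule LeastI_ex) (use distinct[of n] in \<open>auto simp: fun_eq_iff\<close>)
  have "computable_on S (\<lambda>Or n. m n)"
    unfolding m_def
  proof (rule computable_on_Least_pred)
    show "decidable_on S (\<lambda>Or z. F0 (pfst z) (psnd z) \<noteq> F1 (pfst z) (psnd z))"
      by (intro computable_on_intros F0 F1)
  qed (use m in blast)
  then have "decidable_on S (\<lambda>Or n. G n (m n) \<noteq> F0 n (m n))"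
    by (intro decidable_on_not decidable_on_eq computable_on_binop[OF G] computable_on_binop[OF F0]
        computable_on_id)
  moreover have "G n (m n) \<noteq> F0 n (m n) \<longleftrightarrow> B n" for n
    using choice[of n] m[of n] by auto
  ultimately show ?thesis
    by simp
qed

lemma turing_le_if_pca_embedding:
  assumes emb: "pca_embedding (K2_carrier X) K2_app (K2_carrier Y) K2_app f"
  shows "turing_le X Y"
proof -
  let ?F = "\<lambda>g n. f (\<lambda>_. prod_encode (n, g n))"
  have computable: "computable_on {chi Y} (\<lambda>Or z. ?F g (pfst z) (psnd z))" if "g \<in> K2_carrier X" for g
    using pca_embedding_image_computable[OF emb that] .
  have distinct: "?F (\<lambda>_. 0) n \<noteq> ?F (\<lambda>_. 1) n" for n
  proof
    assume "?F (\<lambda>_. 0) n = ?F (\<lambda>_. 1) n"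
    then have "(\<lambda>_. prod_encode (n, 0)) = (\<lambda>_::nat. prod_encode (n, 1))"
      using emb K2_carrier_const unfolding pca_embedding_def inj_on_def by blast
    then show False
      by (metis prod_encode_eq prod.inject zero_neq_one)
  qed
  have choice: "?F (chi X) n = (if n \<in> X then ?F (\<lambda>_. 1) n else ?F (\<lambda>_. 0) n)" for n
    by (simp add: chi_def)
  have "decidable_on {chi Y} (\<lambda>Or n. n \<in> X)"
    by (rule decidable_on_choice[OF computable[OF K2_carrier_const] computable[OF K2_carrier_const]
          computable[OF chi_in_K2_carrier] distinct choice])
  then show ?thesis
    unfolding turing_le_def computable_in_iff_computable_on decidable_on_def chi_def .
qed

theorem theorem6p6:
  fixes X Y :: "nat set"
  shows "(\<exists>f. pca_embedding (K2_carrier X) K2_app (K2_carrier Y) K2_app f) \<longleftrightarrow> turing_le X Y"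
  using turing_le_if_pca_embedding pca_embedding_id by blast

end
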